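(* Let $X\subset\mathbb{R}^2$ be a set in convex position. Then $$\mathcal{M}_X=\bigcap\{\mathcal{M}_Y : Y\subset X,\ \#Y=3\}.$$
   Context: A set $S\subset\mathbb{R}^2$ is in convex position if every point of $S$ lies on the boundary of $\mathrm{conv}(S)$. For a point set $X\subset\mathbb{R}^2$ and a point $O$, $X_O=2O-X$ is the reflection of $X$ in $O$. The point $O$ is an admissible center for $X$ if $X\cup X_O$ is in convex position; $\mathcal{M}_X$ denotes the set of all admissible centers for $X$. (Note $X$ is in c.s.c. position, i.e. contained in the boundary of a centrally symmetric convex body, iff $\mathcal{M}_X\neq\emptyset$.) *)

theory Defs
  imports "HOL-Analysis.Analysis"
begin

definition convex_position :: "(real^2) set \<Rightarrow> bool" where
  "convex_position S \<longleftrightarrow> S \<subseteq> frontier (convex hull S)"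

definition reflect_set :: "real^2 \<Rightarrow> (real^2) set \<Rightarrow> (real^2) set" where
  "reflect_set c X = (\<lambda>x. 2 *\<^sub>R c - x) ` X"

definition admissible_centers :: "(real^2) set \<Rightarrow> (real^2) set" where
  "admissible_centers X = {c. convex_position (X \<union> reflect_set c X)}"

end

theory Submission
  imports Defs
begin

text \<open>If a point of S = X \<union> (2c - X) is interior to conv S, then S meets every open half-plane
  bounded by a line through it (for finite S the converse holds); as S is symmetric about c,
  such a point p may be taken in X. For p \<noteq> c put q = p - c and let r be q rotated by a
  right angle. Directions v with v \<bullet> q < 0 are served by 2c - p, those with v \<bullet> q = 0 by
  any point off the line through p and c, and the remaining ones are positive multiples of
  q + t r. So the
  half-plane condition becomes a covering of the real t-line by open half-lines, and by
  Helly's theorem in dimension one two of them already cover it. Hence p and two further points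
  of X surround p, and c is not admissible for this triple.\<close>

definition surrounds :: "'a::real_inner set \<Rightarrow> 'a \<Rightarrow> bool" where
  "surrounds S p \<longleftrightarrow> (\<forall>v. v \<noteq> 0 \<longrightarrow> (\<exists>s\<in>S. v \<bullet> p < v \<bullet> s))"

lemma interior_convex_hull_imp_surrounds:
  fixes S :: "'a::euclidean_space set"
  assumes "p \<in> interior (convex hull S)"
  shows "surrounds S p"
  unfolding surrounds_def
proof (intro allI impI, rule ccontr)
  fix v :: 'a
  assume v: "v \<noteq> 0" and "\<not> (\<exists>s\<in>S. v \<bullet> p < v \<bullet> s)"
  then have "convex hull S \<subseteq> {x. v \<bullet> x \<le> v \<bullet> p}"
    by (intro hull_minimal) (auto simp: convex_halfspace_le not_less)
  moreover obtain e where e: "e > 0" "ball p e \<subseteq> convex hull S"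
    using assms mem_interior by blast
  moreover have "p + (e / (2 * norm v)) *\<^sub>R v \<in> ball p e"
    using e v by (simp add: dist_norm)
  ultimately have "v \<bullet> (p + (e / (2 * norm v)) *\<^sub>R v) \<le> v \<bullet> p"
    by blast
  moreover have "0 < (e / (2 * norm v)) * (v \<bullet> v)"
    using e v by simp
  ultimately show False
    by (simp add: inner_add_right)
qed

lemma surrounds_imp_interior_convex_hull:
  fixes S :: "'a::euclidean_space set"
  assumes "finite S" and sur: "surrounds S p"
  shows "p \<in> interior (convex hull S)"
proof (rule ccontr)
  assume np: "p \<notin> interior (convex hull S)"
  let ?K = "convex hull S"
  have K: "convex ?K" "closed ?K"
    using \<open>finite S\<close> finite_imp_compact_convex_hull compact_imp_closed by auto
  have SK: "S \<subseteq> ?K" by (rule hull_subset)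
  have no_support: False if "a \<noteq> 0" "\<And>s. s \<in> S \<Longrightarrow> a \<bullet> s \<le> a \<bullet> p" for a
    using sur that unfolding surrounds_def by (meson not_less)
  show False
  proof (cases "p \<in> ?K")
    case False
    then obtain a b where ab: "a \<bullet> p < b" "\<forall>x\<in>?K. b < a \<bullet> x"
      using separating_hyperplane_closed_point[OF K False] by blast
    obtain e :: 'a where "e \<in> Basis" by (meson nonempty_Basis ex_in_conv)
    then obtain s where "s \<in> S"
      using sur nonzero_Basis unfolding surrounds_def by blast
    then have "a \<noteq> 0" using ab SK by fastforce
    moreover have "(-a) \<bullet> s \<le> (-a) \<bullet> p" if "s \<in> S" for s
      using ab SK that by fastforce
    ultimately show False
      using no_support[of "-a"] by simp
  next
    case True
    show False
    proof (cases "interior ?K = {}")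
      case True
      then obtain a b where "a \<noteq> 0" "?K \<subseteq> {x. a \<bullet> x = b}"
        using empty_interior_subset_hyperplane[OF K(1) True] by blast
      moreover have "a \<bullet> s \<le> a \<bullet> p" if "s \<in> S" for s
      proof -
        have "a \<bullet> s = b" "a \<bullet> p = b"
          using calculation(2) SK \<open>p \<in> ?K\<close> that by blast+
        then show ?thesis by simp
      qed
      ultimately show False
        using no_support[of a] by simp
    next
      case False
      then have "p \<in> closure ?K - rel_interior ?K"
        using np \<open>p \<in> ?K\<close> closure_subset rel_interior_nonempty_interior by blast
      then obtain a where "a \<noteq> 0" "\<And>y. y \<in> closure ?K \<Longrightarrow> a \<bullet> p \<le> a \<bullet> y"
        using supporting_hyperplane_relative_frontier[OF K(1)] by blast
      moreover have "(-a) \<bullet> s \<le> (-a) \<bullet> p" if "s \<in> S" for s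
        using calculation(2)[of s] SK closure_subset that by auto
      ultimately show False
        using no_support[of "-a"] by simp
    qed
  qed
qed

lemma halflines_cover_by_two:
  fixes \<alpha> \<beta> :: "'i \<Rightarrow> real"
  assumes cover: "\<forall>t. \<exists>i\<in>I. 0 < \<alpha> i + \<beta> i * t"
    and pos: "i0 \<in> I" "\<beta> i0 > 0" and neg: "i1 \<in> I" "\<beta> i1 < 0"
  shows "\<exists>i\<in>I. \<exists>j\<in>I. \<beta> i > 0 \<and> (\<forall>t. 0 < \<alpha> i + \<beta> i * t \<or> 0 < \<alpha> j + \<beta> j * t)"
proof (rule ccontr)
  \<comment> \<open>Otherwise every threshold of a decreasing half-line lies below every threshold of an
    increasing one, and the infimum m of the latter is covered by no half-line.\<close>
  assume no_pair: "\<not> ?thesis"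
  define U where "U = {-\<alpha> i / \<beta> i | i. i \<in> I \<and> \<beta> i > 0}"
  define D where "D = {-\<alpha> j / \<beta> j | j. j \<in> I \<and> \<beta> j < 0}"
  have D_le_U: "b \<le> a" if ab: "a \<in> U" "b \<in> D" for a b
  proof (rule ccontr)
    assume "\<not> b \<le> a"
    obtain i j where ij: "i \<in> I" "\<beta> i > 0" "a = -\<alpha> i / \<beta> i" "j \<in> I" "\<beta> j < 0" "b = -\<alpha> j / \<beta> j"
      using ab U_def D_def by auto
    have "0 < \<alpha> i + \<beta> i * t \<or> 0 < \<alpha> j + \<beta> j * t" for t
    proof (cases "a < t")
      case True
      then show ?thesis using ij by (simp add: field_simps)
    next
      case False
      then have "t < b" using \<open>\<not> b \<le> a\<close> by simp
      then show ?thesis using ij by (simp add: field_simps)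
    qed
    then show False using no_pair ij by blast
  qed
  have "-\<alpha> i0 / \<beta> i0 \<in> U" "-\<alpha> i1 / \<beta> i1 \<in> D"
    using pos neg by (auto simp: U_def D_def)
  then have U: "U \<noteq> {}" "bdd_below U"
    using D_le_U unfolding bdd_below_def by blast+
  define m where "m = Inf U"
  obtain i where i: "i \<in> I" "0 < \<alpha> i + \<beta> i * m"
    using cover by blast
  consider "\<beta> i > 0" | "\<beta> i < 0" | "\<beta> i = 0" by linarith
  then show False
  proof cases
    case 1
    then have "m \<le> -\<alpha> i / \<beta> i"
      unfolding m_def using i U by (intro cInf_lower) (auto simp: U_def)
    then show False using 1 i by (simp add: field_simps)
  next
    case 2
    then have "-\<alpha> i / \<beta> i \<le> m"
      unfolding m_def using i U D_le_U by (intro cInf_greatest) (auto simp: D_def)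
    then show False using 2 i by (simp add: field_simps)
  next
    case 3
    then show False using no_pair pos i by (metis add.right_neutral mult_zero_left)
  qed
qed

definition rot90 :: "real^2 \<Rightarrow> real^2" where
  "rot90 q = vector [-(q$2), q$1]"

lemma inner_rot90_self [simp]: "rot90 q \<bullet> q = 0"
  by (simp add: rot90_def inner_vec_def sum_2)

lemma rot90_eq_0_iff [simp]: "rot90 q = 0 \<longleftrightarrow> q = 0"
  by (auto simp: rot90_def vec_eq_iff forall_2)

lemma inner_self_scaleR_decompose:
  fixes q v :: "real^2"
  shows "(q \<bullet> q) *\<^sub>R v = (v \<bullet> q) *\<^sub>R q + (v \<bullet> rot90 q) *\<^sub>R rot90 q"
  by (simp add: vec_eq_iff forall_2 rot90_def inner_vec_def sum_2 algebra_simps)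

definition centrally_symmetric :: "'a::real_vector \<Rightarrow> 'a set \<Rightarrow> bool" where
  "centrally_symmetric c S \<longleftrightarrow> (\<forall>s\<in>S. 2 *\<^sub>R c - s \<in> S)"

lemma centrally_symmetric_ex_gt_center:
  assumes "centrally_symmetric c S" "s \<in> S" "v \<bullet> s \<noteq> v \<bullet> c"
  shows "\<exists>s'\<in>S. v \<bullet> c < v \<bullet> s'"
proof (cases "v \<bullet> c < v \<bullet> s")
  case False
  then have "v \<bullet> c < v \<bullet> (2 *\<^sub>R c - s)"
    using assms(3) by (simp add: inner_diff_right)
  then show ?thesis
    using assms(1,2) unfolding centrally_symmetric_def by blast
qed (use assms in blast)

lemma surrounds_center_by_two:
  fixes c :: "real^2"
  assumes "centrally_symmetric c S" and "surrounds S c"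
  obtains s0 s1 where "s0 \<in> S" "s1 \<in> S"
    and "\<And>S'. centrally_symmetric c S' \<Longrightarrow> s0 \<in> S' \<Longrightarrow> s1 \<in> S' \<Longrightarrow> surrounds S' c"
proof -
  obtain s0 where s0: "s0 \<in> S" "axis 1 1 \<bullet> c < axis 1 1 \<bullet> s0"
    using \<open>surrounds S c\<close> unfolding surrounds_def by (metis axis_eq_0_iff zero_neq_one)
  define d where "d = s0 - c"
  have "d \<noteq> 0" using s0(2) by (auto simp: d_def)
  then obtain s1 where s1: "s1 \<in> S" "rot90 d \<bullet> c < rot90 d \<bullet> s1"
    using \<open>surrounds S c\<close> unfolding surrounds_def by (meson rot90_eq_0_iff)
  have "surrounds S' c" if S': "centrally_symmetric c S'" "s0 \<in> S'" "s1 \<in> S'" for S'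
    unfolding surrounds_def
  proof (intro allI impI)
    fix v :: "real^2"
    assume "v \<noteq> 0"
    show "\<exists>s\<in>S'. v \<bullet> c < v \<bullet> s"
    proof (cases "v \<bullet> s0 = v \<bullet> c")
      case True
      then have "(d \<bullet> d) *\<^sub>R v = (v \<bullet> rot90 d) *\<^sub>R rot90 d"
        using inner_self_scaleR_decompose[of d v] by (simp add: d_def inner_diff_right)
      then have "(d \<bullet> d) * (v \<bullet> (s1 - c)) = (v \<bullet> rot90 d) * (rot90 d \<bullet> (s1 - c))"
        by (metis inner_scaleR_left)
      moreover have "v \<bullet> rot90 d \<noteq> 0"
        using \<open>(d \<bullet> d) *\<^sub>R v = _\<close> \<open>v \<noteq> 0\<close> \<open>d \<noteq> 0\<close> by auto
      ultimately have "v \<bullet> s1 \<noteq> v \<bullet> c"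
        using s1(2) \<open>d \<noteq> 0\<close> by (auto simp: inner_diff_right)
      then show ?thesis using centrally_symmetric_ex_gt_center S' by blast
    qed (use centrally_symmetric_ex_gt_center S' in blast)
  qed
  then show thesis using that s0 s1 by blast
qed

lemma surrounds_imp_line:
  fixes p c :: "real^2"
  defines "q \<equiv> p - c" and "r \<equiv> rot90 (p - c)"
  assumes sur: "surrounds S p" and "p \<noteq> c"
  shows "\<exists>s\<in>S. r \<bullet> p \<noteq> r \<bullet> s" and "\<And>t. \<exists>s\<in>S. (q + t *\<^sub>R r) \<bullet> p < (q + t *\<^sub>R r) \<bullet> s"
proof -
  have "r \<noteq> 0" using \<open>p \<noteq> c\<close> by (simp add: r_def)
  then show "\<exists>s\<in>S. r \<bullet> p \<noteq> r \<bullet> s"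
    using sur unfolding surrounds_def by force
  fix t
  have "(q + t *\<^sub>R r) \<bullet> q = q \<bullet> q"
    by (simp add: q_def r_def inner_add_left)
  then have "q + t *\<^sub>R r \<noteq> 0"
    using \<open>p \<noteq> c\<close> by (auto simp: q_def)
  then show "\<exists>s\<in>S. (q + t *\<^sub>R r) \<bullet> p < (q + t *\<^sub>R r) \<bullet> s"
    using sur unfolding surrounds_def by blast
qed

lemma line_imp_surrounds:
  fixes p c :: "real^2"
  defines "q \<equiv> p - c" and "r \<equiv> rot90 (p - c)"
  assumes sym: "centrally_symmetric c S" and "p \<in> S" "p \<noteq> c"
    and s0: "s0 \<in> S" "r \<bullet> p \<noteq> r \<bullet> s0"
    and line: "\<And>t. \<exists>s\<in>S. (q + t *\<^sub>R r) \<bullet> p < (q + t *\<^sub>R r) \<bullet> s"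
  shows "surrounds S p"
  unfolding surrounds_def
proof (intro allI impI)
  fix v :: "real^2"
  assume "v \<noteq> 0"
  have N: "q \<bullet> q > 0" using \<open>p \<noteq> c\<close> by (simp add: q_def)
  have decomp: "(q \<bullet> q) *\<^sub>R v = (v \<bullet> q) *\<^sub>R q + (v \<bullet> r) *\<^sub>R r"
    unfolding q_def r_def by (rule inner_self_scaleR_decompose)
  consider "v \<bullet> q < 0" | "v \<bullet> q = 0" | "v \<bullet> q > 0" by linarith
  then show "\<exists>s\<in>S. v \<bullet> p < v \<bullet> s"
  proof cases
    case 1
    then have "v \<bullet> p < v \<bullet> (2 *\<^sub>R c - p)"
      by (simp add: q_def inner_diff_right)
    then show ?thesis using sym \<open>p \<in> S\<close> unfolding centrally_symmetric_def by blast
  next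
    case 2
    then have "(q \<bullet> q) * (v \<bullet> (s0 - p)) = (v \<bullet> r) * (r \<bullet> (s0 - p))"
      using decomp by (metis add_0 inner_scaleR_left scale_zero_left)
    moreover have "v \<bullet> r \<noteq> 0"
      using decomp 2 N \<open>v \<noteq> 0\<close> by auto
    ultimately have "v \<bullet> s0 \<noteq> v \<bullet> c"
      using s0(2) N 2 by (auto simp: q_def inner_diff_right)
    moreover have "v \<bullet> p = v \<bullet> c"
      using 2 by (simp add: q_def inner_diff_right)
    ultimately show ?thesis
      using centrally_symmetric_ex_gt_center[OF sym s0(1)] by simp
  next
    case 3
    \<comment> \<open>then v is a positive multiple of q + t r\<close>
    define t where "t = (v \<bullet> r) / (v \<bullet> q)"
    have "((v \<bullet> q) / (q \<bullet> q)) *\<^sub>R (q + t *\<^sub>R r)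
        = inverse (q \<bullet> q) *\<^sub>R ((v \<bullet> q) *\<^sub>R q + (v \<bullet> r) *\<^sub>R r)"
      using 3 by (simp add: t_def scaleR_add_right divide_inverse mult.commute)
    then have v: "v = ((v \<bullet> q) / (q \<bullet> q)) *\<^sub>R (q + t *\<^sub>R r)"
      using N by (simp add: decomp[symmetric])
    obtain s where "s \<in> S" "(q + t *\<^sub>R r) \<bullet> p < (q + t *\<^sub>R r) \<bullet> s"
      using line by blast
    moreover have "(v \<bullet> q) / (q \<bullet> q) > 0" using 3 N by simp
    ultimately have "v \<bullet> p < v \<bullet> s"
      by (subst (1 2) v) (simp only: inner_scaleR_left mult_strict_left_mono)
    then show ?thesis using \<open>s \<in> S\<close> by blast
  qed
qed

lemma surrounds_by_two:
  fixes p c :: "real^2"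
  assumes sym: "centrally_symmetric c S" and "p \<in> S" and "surrounds S p"
  obtains s0 s1 where "s0 \<in> S" "s1 \<in> S"
    and "\<And>S'. centrally_symmetric c S' \<Longrightarrow> p \<in> S' \<Longrightarrow> s0 \<in> S' \<Longrightarrow> s1 \<in> S' \<Longrightarrow> surrounds S' p"
proof (cases "p = c")
  case True
  then show thesis
    using surrounds_center_by_two[OF sym] \<open>surrounds S p\<close> that by metis
next
  case False
  define q where "q = p - c"
  define r where "r = rot90 (p - c)"
  have line_iff: "(q + t *\<^sub>R r) \<bullet> p < (q + t *\<^sub>R r) \<bullet> s \<longleftrightarrow> 0 < (q \<bullet> s - q \<bullet> p) + (r \<bullet> s - r \<bullet> p) * t"
    for s t
    by (simp add: inner_add_left algebra_simps)
  obtain s0 where s0: "s0 \<in> S" "r \<bullet> p \<noteq> r \<bullet> s0"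
    and line: "\<And>t. \<exists>s\<in>S. (q + t *\<^sub>R r) \<bullet> p < (q + t *\<^sub>R r) \<bullet> s"
    using surrounds_imp_line[OF \<open>surrounds S p\<close> False] unfolding q_def r_def by blast
  have "2 *\<^sub>R c - s0 \<in> S"
    using sym s0(1) unfolding centrally_symmetric_def by blast
  moreover have "r \<bullet> (2 *\<^sub>R c - s0) - r \<bullet> p = - (r \<bullet> s0 - r \<bullet> p)"
    using inner_rot90_self[of "p - c"] by (simp add: r_def inner_diff_right)
  ultimately obtain i0 i1 where "i0 \<in> S" "r \<bullet> i0 - r \<bullet> p > 0" "i1 \<in> S" "r \<bullet> i1 - r \<bullet> p < 0"
  proof (cases "r \<bullet> s0 - r \<bullet> p > 0")
    case True
    then show thesis using that[of s0 "2 *\<^sub>R c - s0"] s0 \<open>2 *\<^sub>R c - s0 \<in> S\<close> \<open>r \<bullet> (2 *\<^sub>R c - s0) - _ = _\<close> by simp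
  next
    case False
    then show thesis using that[of "2 *\<^sub>R c - s0" s0] s0 \<open>2 *\<^sub>R c - s0 \<in> S\<close> \<open>r \<bullet> (2 *\<^sub>R c - s0) - _ = _\<close> by simp
  qed
  from halflines_cover_by_two[of S "\<lambda>s. q \<bullet> s - q \<bullet> p" "\<lambda>s. r \<bullet> s - r \<bullet> p", OF _ this]
  obtain s1 s2 where s12: "s1 \<in> S" "s2 \<in> S" "r \<bullet> s1 - r \<bullet> p > 0"
    and cover: "\<And>t. (q + t *\<^sub>R r) \<bullet> p < (q + t *\<^sub>R r) \<bullet> s1 \<or> (q + t *\<^sub>R r) \<bullet> p < (q + t *\<^sub>R r) \<bullet> s2"
    using line unfolding line_iff by blast
  have "surrounds S' p" if "centrally_symmetric c S'" "p \<in> S'" "s1 \<in> S'" "s2 \<in> S'" for S'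
  proof (rule line_imp_surrounds[OF that(1,2) False that(3)])
    show "rot90 (p - c) \<bullet> p \<noteq> rot90 (p - c) \<bullet> s1"
      using s12(3) by (simp add: r_def)
    show "\<exists>s\<in>S'. (p - c + t *\<^sub>R rot90 (p - c)) \<bullet> p < (p - c + t *\<^sub>R rot90 (p - c)) \<bullet> s" for t
      using cover[of t] that(3,4) unfolding q_def r_def by blast
  qed
  then show thesis using that s12 by blast
qed

lemma reflect_set_mono: "Y \<subseteq> X \<Longrightarrow> reflect_set c Y \<subseteq> reflect_set c X"
  unfolding reflect_set_def by auto

lemma centrally_symmetric_reflect_union: "centrally_symmetric c (X \<union> reflect_set c X)"
  unfolding centrally_symmetric_def reflect_set_def by auto

lemma surrounds_reflect:
  assumes "centrally_symmetric c S" "surrounds S z"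
  shows "surrounds S (2 *\<^sub>R c - z)"
  unfolding surrounds_def
proof (intro allI impI)
  fix v :: 'a
  assume "v \<noteq> 0"
  then obtain s where "s \<in> S" "(-v) \<bullet> z < (-v) \<bullet> s"
    using assms(2) unfolding surrounds_def by (metis neg_equal_0_iff_equal)
  then have "2 *\<^sub>R c - s \<in> S" "v \<bullet> (2 *\<^sub>R c - z) < v \<bullet> (2 *\<^sub>R c - s)"
    using assms(1) by (auto simp: centrally_symmetric_def inner_diff_right)
  then show "\<exists>s\<in>S. v \<bullet> (2 *\<^sub>R c - z) < v \<bullet> s" by blast
qed

lemma convex_position_subset:
  assumes "convex_position S" "T \<subseteq> S"
  shows "convex_position T"
  unfolding convex_position_def
proof
  fix x
  assume "x \<in> T"
  then have "x \<in> closure (convex hull T)"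
    using closure_subset hull_inc by (metis subsetD)
  moreover have "x \<notin> interior (convex hull S)"
    using assms \<open>x \<in> T\<close> unfolding convex_position_def frontier_def by auto
  then have "x \<notin> interior (convex hull T)"
    using interior_mono[OF hull_mono[OF \<open>T \<subseteq> S\<close>]] by blast
  ultimately show "x \<in> frontier (convex hull T)"
    unfolding frontier_def by blast
qed

lemma admissible_centers_antimono:
  assumes "Y \<subseteq> X"
  shows "admissible_centers X \<subseteq> admissible_centers Y"
  unfolding admissible_centers_def
  using convex_position_subset Un_mono[OF assms reflect_set_mono[OF assms]] by blast

lemma not_admissible_center_surrounds:
  assumes "c \<notin> admissible_centers X"
  obtains p where "p \<in> X" "surrounds (X \<union> reflect_set c X) p"
proof -
  let ?S = "X \<union> reflect_set c X"
  obtain z where "z \<in> ?S" "z \<notin> frontier (convex hull ?S)"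
    using assms unfolding admissible_centers_def convex_position_def by blast
  moreover have "z \<in> closure (convex hull ?S)"
    using \<open>z \<in> ?S\<close> closure_subset hull_inc by (metis subsetD)
  ultimately have "z \<in> interior (convex hull ?S)"
    unfolding frontier_def by blast
  then have sur: "surrounds ?S z"
    by (rule interior_convex_hull_imp_surrounds)
  show thesis
  proof (cases "z \<in> X")
    case True
    then show thesis using that sur by blast
  next
    case False
    then obtain p where "p \<in> X" "z = 2 *\<^sub>R c - p"
      using \<open>z \<in> ?S\<close> unfolding reflect_set_def by blast
    moreover have "surrounds ?S (2 *\<^sub>R c - z)"
      using surrounds_reflect[OF centrally_symmetric_reflect_union sur] .
    ultimately show thesis using that by simp
  qed
qed

lemma surrounds_not_admissible_center:
  assumes "finite Y" "p \<in> Y" "surrounds (Y \<union> reflect_set c Y) p"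
  shows "c \<notin> admissible_centers Y"
proof -
  have "finite (Y \<union> reflect_set c Y)"
    using assms(1) by (simp add: reflect_set_def)
  then have "p \<in> interior (convex hull (Y \<union> reflect_set c Y))"
    using assms(3) by (rule surrounds_imp_interior_convex_hull)
  then show ?thesis
    using assms(2) unfolding admissible_centers_def convex_position_def frontier_def by blast
qed

lemma not_surrounds_pair: "\<not> surrounds ({p, e} \<union> reflect_set c {p, e}) (p :: real^2)"
proof -
  obtain w :: "real^2" where "w \<noteq> 0" "w \<bullet> (e - c) = 0"
    using orthogonal_to_vector_exists[of "e - c"] by (auto simp: orthogonal_def inner_commute)
  define v where "v = (if 0 \<le> w \<bullet> (p - c) then w else - w)"
  have "v \<noteq> 0" "v \<bullet> e = v \<bullet> c" "v \<bullet> c \<le> v \<bullet> p"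
    using \<open>w \<noteq> 0\<close> \<open>w \<bullet> (e - c) = 0\<close> by (auto simp: v_def inner_diff_right)
  then show ?thesis
    unfolding surrounds_def reflect_set_def by (auto simp: inner_diff_right intro!: exI[of _ v])
qed

lemma surrounds_by_three:
  fixes X :: "(real^2) set"
  assumes "p \<in> X" "surrounds (X \<union> reflect_set c X) p"
  obtains Y where "Y \<subseteq> X" "card Y = 3" "p \<in> Y" "surrounds (Y \<union> reflect_set c Y) p"
proof -
  obtain s0 s1 where "s0 \<in> X \<union> reflect_set c X" "s1 \<in> X \<union> reflect_set c X"
    and two: "\<And>S'. centrally_symmetric c S' \<Longrightarrow> p \<in> S' \<Longrightarrow> s0 \<in> S' \<Longrightarrow> s1 \<in> S' \<Longrightarrow> surrounds S' p"
    using surrounds_by_two[OF centrally_symmetric_reflect_union _ assms(2)] assms(1) by blast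
  then obtain a b where ab: "a \<in> X" "b \<in> X" "s0 \<in> {a, 2 *\<^sub>R c - a}" "s1 \<in> {b, 2 *\<^sub>R c - b}"
    unfolding reflect_set_def by blast
  define Y where "Y = {p, a, b}"
  have sur: "surrounds (Y \<union> reflect_set c Y) p"
    using ab by (intro two centrally_symmetric_reflect_union) (auto simp: Y_def reflect_set_def)
  have "card Y = 3"
  proof (cases "a = p \<or> b = p \<or> a = b")
    case True
    then obtain e where "Y = {p, e}"
      unfolding Y_def by auto
    then show ?thesis using sur not_surrounds_pair by blast
  qed (auto simp: Y_def)
  moreover have "Y \<subseteq> X" using assms(1) ab by (simp add: Y_def)
  moreover have "p \<in> Y" by (simp add: Y_def)
  ultimately show thesis using that sur by blast
qed

lemma admissible_centers_eq_Inter_triples: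
  fixes X :: "(real^2) set"
  shows "admissible_centers X = \<Inter> {admissible_centers Y | Y. Y \<subseteq> X \<and> card Y = 3}"
proof
  show "admissible_centers X \<subseteq> \<Inter> {admissible_centers Y | Y. Y \<subseteq> X \<and> card Y = 3}"
    using admissible_centers_antimono by blast
  show "\<Inter> {admissible_centers Y | Y. Y \<subseteq> X \<and> card Y = 3} \<subseteq> admissible_centers X"
  proof (rule subsetI, rule ccontr)
    fix c
    assume c: "c \<in> \<Inter> {admissible_centers Y | Y. Y \<subseteq> X \<and> card Y = 3}"
      and "c \<notin> admissible_centers X"
    from this(2) obtain p where "p \<in> X" "surrounds (X \<union> reflect_set c X) p"
      by (rule not_admissible_center_surrounds)
    then obtain Y where "Y \<subseteq> X" "card Y = 3" "p \<in> Y" "surrounds (Y \<union> reflect_set c Y) p"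
      by (rule surrounds_by_three)
    moreover from this have "finite Y" by (simp add: card_ge_0_finite)
    ultimately show False
      using c surrounds_not_admissible_center by blast
  qed
qed

theorem mainTheorem5:
  fixes X :: "(real^2) set"
  assumes "convex_position X"
  shows "admissible_centers X = \<Inter> {admissible_centers Y | Y. Y \<subseteq> X \<and> card Y = 3}"
  by (rule admissible_centers_eq_Inter_triples)

end
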